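(* Fix a reflection matrix $\mathbf\Phi$ and suppose problem (SDR1.2) has an optimal solution. Then there exists an optimal solution $(\{\mathbf W_k^\star\},\mathbf R_0^\star)$ of (SDR1.2) with $\mathbf R_0^\star=\mathbf 0$.
   Context: Let $M,N,K\ge1$ be integers and $\mathcal K=\{1,\dots,K\}$. Fixed data: $\mathbf G\in\mathbb C^{N\times M}$, $\mathbf h_{\mathrm d,k}\in\mathbb C^{M}$ and $\mathbf h_{\mathrm r,k}\in\mathbb C^{N}$ for $k\in\mathcal K$, thresholds $\Gamma_k>0$, noise powers $\sigma_k^2>0$, and a power budget $P_0>0$. A reflection matrix is $\mathbf\Phi=\mathrm{diag}(\mathbf v)$ with $\mathbf v\in\mathbb C^N$, $|v_n|=1$ for all $n$. For a given $\mathbf\Phi$ put $\mathbf h_k=\mathbf h_{\mathrm d,k}+\mathbf G^H\mathbf\Phi^H\mathbf h_{\mathrm r,k}$ and $\mathbf H_k=\mathbf h_k\mathbf h_k^H$. For Hermitian $\mathbf X\succeq\mathbf 0$ define $f(\mathbf X)=\mathrm{tr}\big((\mathbf G\mathbf X\mathbf G^H)^{-1}\big)$ if $\mathbf G\mathbf X\mathbf G^H$ is invertible and $f(\mathbf X)=+\infty$ otherwise. Problem (SDR1.2) (for fixed $\mathbf\Phi$): minimize $f\big(\sum_k\mathbf W_k+\mathbf R_0\big)$ over Hermitian $\mathbf W_k\succeq\mathbf 0$ ($k\in\mathcal K$) and $\mathbf R_0\succeq\mathbf 0$, subject to $(1+\tfrac1{\Gamma_k})\mathrm{tr}(\mathbf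 H_k\mathbf W_k)-\mathrm{tr}\big(\mathbf H_k(\sum_{i}\mathbf W_i+\mathbf R_0)\big)\ge\sigma_k^2$ for all $k$, and $\sum_k\mathrm{tr}(\mathbf W_k)+\mathrm{tr}(\mathbf R_0)\le P_0$. *)

theory Defs
  imports "HOL-Analysis.Analysis" "HOL-Library.Extended_Real"
begin

definition adj :: "complex^'n^'m \<Rightarrow> complex^'m^'n" where
  "adj A = (\<chi> i j. cnj (A $ j $ i))"

definition hermitian :: "complex^'n^'n \<Rightarrow> bool" where
  "hermitian X \<longleftrightarrow> adj X = X"

definition psd :: "complex^'n^'n \<Rightarrow> bool" where
  "psd X \<longleftrightarrow> hermitian X \<and> (\<forall>x. 0 \<le> Re (\<Sum>i\<in>UNIV. cnj (x $ i) * (X *v x) $ i))"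

definition diag_mat :: "complex^'n \<Rightarrow> complex^'n^'n" where
  "diag_mat v = (\<chi> i j. if i = j then v $ i else 0)"

definition outer :: "complex^'n \<Rightarrow> complex^'n^'n" where
  "outer h = (\<chi> i j. h $ i * cnj (h $ j))"

definition eff_chan :: "complex^'m^'n \<Rightarrow> complex^'n^'n \<Rightarrow> complex^'m \<Rightarrow> complex^'n \<Rightarrow> complex^'m" where
  "eff_chan G Phi hD hR = hD + adj G *v (adj Phi *v hR)"

text \<open>Objective f(X) = tr((G X G^H)^{-1}) if G X G^H invertible, +\<infinity> otherwise.
  (For Hermitian PSD X the trace is real; we take its real part.)\<close>
definition obj :: "complex^'m^'n \<Rightarrow> complex^'m^'m \<Rightarrow> ereal" where
  "obj G X = (if invertible (G ** X ** adj G)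
              then ereal (Re (trace (matrix_inv (G ** X ** adj G))))
              else \<infinity>)"

definition feasible ::
  "complex^'m^'n \<Rightarrow> complex^'n^'n \<Rightarrow> ('k::finite \<Rightarrow> complex^'m) \<Rightarrow> ('k \<Rightarrow> complex^'n)
   \<Rightarrow> ('k \<Rightarrow> real) \<Rightarrow> ('k \<Rightarrow> real) \<Rightarrow> real
   \<Rightarrow> ('k \<Rightarrow> complex^'m^'m) \<Rightarrow> complex^'m^'m \<Rightarrow> bool" where
  "feasible G Phi hD hR Gam sig2 P0 W R0 \<longleftrightarrow>
     (\<forall>k. psd (W k)) \<and> psd R0 \<and>
     (\<forall>k. let Hk = outer (eff_chan G Phi (hD k) (hR k)) in
        (1 + 1 / Gam k) * Re (trace (Hk ** W k))
          - Re (trace (Hk ** ((\<Sum>i\<in>UNIV. W i) + R0))) \<ge> sig2 k) \<and>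
     (\<Sum>k\<in>UNIV. Re (trace (W k))) + Re (trace R0) \<le> P0"

definition optimal ::
  "complex^'m^'n \<Rightarrow> complex^'n^'n \<Rightarrow> ('k::finite \<Rightarrow> complex^'m) \<Rightarrow> ('k \<Rightarrow> complex^'n)
   \<Rightarrow> ('k \<Rightarrow> real) \<Rightarrow> ('k \<Rightarrow> real) \<Rightarrow> real
   \<Rightarrow> ('k \<Rightarrow> complex^'m^'m) \<Rightarrow> complex^'m^'m \<Rightarrow> bool" where
  "optimal G Phi hD hR Gam sig2 P0 W R0 \<longleftrightarrow>
     feasible G Phi hD hR Gam sig2 P0 W R0 \<and>
     (\<forall>W' R0'. feasible G Phi hD hR Gam sig2 P0 W' R0' \<longrightarrow>
        obj G ((\<Sum>i\<in>UNIV. W i) + R0) \<le> obj G ((\<Sum>i\<in>UNIV. W' i) + R0'))"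

end

theory Submission
  imports Defs
begin

text \<open>Absorbing the dedicated sensing covariance \<open>R\<^sub>0\<close> into one beamformer \<open>W\<^sub>k\<^sub>0\<close>
  leaves the total transmit covariance \<open>\<Sum>\<^sub>i W\<^sub>i + R\<^sub>0\<close> unchanged, hence also the
  objective, the interference terms and the power. The only quantity that changes is the
  useful signal \<open>tr(H\<^sub>k\<^sub>0 W\<^sub>k\<^sub>0)\<close>, which grows by \<open>tr(H\<^sub>k\<^sub>0 R\<^sub>0) = h\<^sup>H R\<^sub>0 h \<ge> 0\<close>; so the new
  point is feasible and, having the same objective value, optimal. Nothing about the reflection
  matrix, the noise powers or the power budget is used.\<close>

lemma hermitian_add: "hermitian A \<Longrightarrow> hermitian B \<Longrightarrow> hermitian (A + B)"
  unfolding hermitian_def adj_def by (simp add: vec_eq_iff)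

lemma psd_0: "psd 0"
  unfolding psd_def hermitian_def adj_def by (simp add: vec_eq_iff)

lemma psd_add:
  fixes A B :: "complex^'n^'n"
  assumes "psd A" "psd B"
  shows "psd (A + B)"
  unfolding psd_def
proof (intro conjI allI)
  show "hermitian (A + B)"
    using assms hermitian_add unfolding psd_def by blast
next
  fix x :: "complex^'n"
  have "(\<Sum>i\<in>UNIV. cnj (x $ i) * ((A + B) *v x) $ i) =
        (\<Sum>i\<in>UNIV. cnj (x $ i) * (A *v x) $ i) + (\<Sum>i\<in>UNIV. cnj (x $ i) * (B *v x) $ i)"
    by (simp add: matrix_vector_mult_add_rdistrib distrib_left sum.distrib)
  then show "0 \<le> Re (\<Sum>i\<in>UNIV. cnj (x $ i) * ((A + B) *v x) $ i)"
    using assms unfolding psd_def by simp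
qed

lemma trace_outer_mult: "trace (outer h ** R) = (\<Sum>j\<in>UNIV. cnj (h $ j) * (R *v h) $ j)"
  unfolding trace_def outer_def matrix_matrix_mult_def matrix_vector_mult_def
  by (simp add: sum_distrib_left mult_ac) (subst sum.swap, simp add: mult_ac)

lemma psd_trace_outer_mult_nonneg: "psd R \<Longrightarrow> 0 \<le> Re (trace (outer h ** R))"
  unfolding trace_outer_mult psd_def by blast

lemma sum_fun_upd_add:
  fixes f :: "'a \<Rightarrow> 'b::comm_monoid_add"
  assumes "finite A" "a \<in> A"
  shows "sum (f(a := f a + r)) A = sum f A + r"
proof -
  have "f(a := f a + r) = (\<lambda>x. f x + (if x = a then r else 0))"
    by auto
  then show ?thesis
    using assms by (simp add: sum.distrib)
qed

lemma feasible_absorb_R0: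
  assumes feas: "feasible G Phi hD hR Gam sig2 P0 W R0"
    and Gam_pos: "\<forall>k. Gam k > 0"
  shows "feasible G Phi hD hR Gam sig2 P0 (W(k0 := W k0 + R0)) 0"
proof -
  let ?W' = "W(k0 := W k0 + R0)"
  have psd_R0: "psd R0"
    using feas unfolding feasible_def by blast
  have total: "(\<Sum>i\<in>UNIV. ?W' i) = (\<Sum>i\<in>UNIV. W i) + R0"
    by (rule sum_fun_upd_add) simp_all
  have power: "(\<Sum>k\<in>UNIV. Re (trace (?W' k))) = (\<Sum>k\<in>UNIV. Re (trace (W k))) + Re (trace R0)"
  proof -
    have "(\<lambda>k. Re (trace (?W' k))) = (\<lambda>k. Re (trace (W k)))(k0 := Re (trace (W k0)) + Re (trace R0))"
      by (auto simp: trace_add)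
    then show ?thesis
      by (metis sum_fun_upd_add finite UNIV_I)
  qed
  show ?thesis
    unfolding feasible_def Let_def
  proof (intro conjI allI psd_0)
    fix k
    show "psd (?W' k)"
      using feas psd_add[OF _ psd_R0] unfolding feasible_def by simp
    let ?H = "outer (eff_chan G Phi (hD k) (hR k))"
    have signal: "Re (trace (?H ** W k)) \<le> Re (trace (?H ** ?W' k))"
      using psd_trace_outer_mult_nonneg[OF psd_R0]
      by (simp add: matrix_add_ldistrib trace_add)
    have "0 \<le> 1 + 1 / Gam k"
      using Gam_pos by (simp add: add_nonneg_nonneg less_imp_le)
    then have "(1 + 1 / Gam k) * Re (trace (?H ** W k)) \<le> (1 + 1 / Gam k) * Re (trace (?H ** ?W' k))"
      using signal by (rule mult_left_mono[rotated])
    moreover have "sig2 k \<le> (1 + 1 / Gam k) * Re (trace (?H ** W k))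
                          - Re (trace (?H ** ((\<Sum>i\<in>UNIV. W i) + R0)))"
      using feas unfolding feasible_def Let_def by blast
    ultimately show "sig2 k \<le> (1 + 1 / Gam k) * Re (trace (?H ** ?W' k))
                              - Re (trace (?H ** ((\<Sum>i\<in>UNIV. ?W' i) + 0)))"
      using total by simp
  next
    show "(\<Sum>k\<in>UNIV. Re (trace (?W' k))) + Re (trace 0) \<le> P0"
      using feas power unfolding feasible_def by (simp add: trace_def)
  qed
qed

lemma optimal_if_feasible_same_total:
  assumes "optimal G Phi hD hR Gam sig2 P0 W R0"
    and "feasible G Phi hD hR Gam sig2 P0 W' R0'"
    and "(\<Sum>i\<in>UNIV. W' i) + R0' = (\<Sum>i\<in>UNIV. W i) + R0"
  shows "optimal G Phi hD hR Gam sig2 P0 W' R0'"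
  using assms unfolding optimal_def by simp

theorem proposition2:
  fixes G :: "complex^'m::finite^'n::finite"
    and v :: "complex^'n"
    and hD :: "'k::finite \<Rightarrow> complex^'m"
    and hR :: "'k \<Rightarrow> complex^'n"
    and Gam sig2 :: "'k \<Rightarrow> real"
    and P0 :: real
  assumes unit: "\<forall>n. norm (v $ n) = 1"
    and Gam_pos: "\<forall>k. Gam k > 0"
    and sig_pos: "\<forall>k. sig2 k > 0"
    and P0_pos: "P0 > 0"
    and has_opt: "\<exists>W R0. optimal G (diag_mat v) hD hR Gam sig2 P0 W R0"
  shows "\<exists>W. optimal G (diag_mat v) hD hR Gam sig2 P0 W 0"
proof -
  obtain W R0 where opt: "optimal G (diag_mat v) hD hR Gam sig2 P0 W R0"
    using has_opt by blast
  fix k0 :: 'k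
  let ?W' = "W(k0 := W k0 + R0)"
  have "feasible G (diag_mat v) hD hR Gam sig2 P0 ?W' 0"
    using opt Gam_pos feasible_absorb_R0 unfolding optimal_def by blast
  moreover have "(\<Sum>i\<in>UNIV. ?W' i) + 0 = (\<Sum>i\<in>UNIV. W i) + R0"
    using sum_fun_upd_add[of UNIV k0 W R0] by simp
  ultimately have "optimal G (diag_mat v) hD hR Gam sig2 P0 ?W' 0"
    using optimal_if_feasible_same_total[OF opt] by blast
  then show ?thesis
    by blast
qed

end
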